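(* Let $\mathbb{F}$ be a field with $\mathrm{char}(\mathbb{F})\neq 2$ and let $L$ be a finite-dimensional semisimple Lie algebra over $\mathbb{F}$. Then $b(L)\geq 2$.
   Context: For $x\in L$, $b(x)=\mathrm{rank}(\mathrm{ad}_x)$ and the breadth of $L$ is $b(L)=\max\{b(x)\mid x\in L\}$. *)

theory Defs
  imports Complex_Main
begin

text \<open>A Lie algebra over the field 'k, with underlying vector space the whole type 'v
  (scalar multiplication scale, bracket br).\<close>
definition lie_algebra :: "('k::field \<Rightarrow> 'v::ab_group_add \<Rightarrow> 'v) \<Rightarrow> ('v \<Rightarrow> 'v \<Rightarrow> 'v) \<Rightarrow> bool" where
  "lie_algebra scale br \<longleftrightarrow>
     Vector_Spaces.vector_space scale \<and>
     (\<forall>x y z. br (x + y) z = br x z + br y z) \<and>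
     (\<forall>x y z. br x (y + z) = br x y + br x z) \<and>
     (\<forall>a x y. br (scale a x) y = scale a (br x y)) \<and>
     (\<forall>a x y. br x (scale a y) = scale a (br x y)) \<and>
     (\<forall>x. br x x = 0) \<and>
     (\<forall>x y z. br x (br y z) + br y (br z x) + br z (br x y) = 0)"

definition finite_dimensional :: "('k::field \<Rightarrow> 'v::ab_group_add \<Rightarrow> 'v) \<Rightarrow> bool" where
  "finite_dimensional scale \<longleftrightarrow> (\<exists>B. finite B \<and> module.span scale B = UNIV)"

definition lie_ideal :: "('k::field \<Rightarrow> 'v::ab_group_add \<Rightarrow> 'v) \<Rightarrow> ('v \<Rightarrow> 'v \<Rightarrow> 'v) \<Rightarrow> 'v set \<Rightarrow> bool" where
  "lie_ideal scale br I \<longleftrightarrow> module.subspace scale I \<and> (\<forall>x y. y \<in> I \<longrightarrow> br x y \<in> I)"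

fun derived_series :: "('k::field \<Rightarrow> 'v::ab_group_add \<Rightarrow> 'v) \<Rightarrow> ('v \<Rightarrow> 'v \<Rightarrow> 'v) \<Rightarrow> 'v set \<Rightarrow> nat \<Rightarrow> 'v set" where
  "derived_series scale br I 0 = I"
| "derived_series scale br I (Suc n) =
     module.span scale {br a b | a b. a \<in> derived_series scale br I n \<and> b \<in> derived_series scale br I n}"

definition lie_solvable :: "('k::field \<Rightarrow> 'v::ab_group_add \<Rightarrow> 'v) \<Rightarrow> ('v \<Rightarrow> 'v \<Rightarrow> 'v) \<Rightarrow> 'v set \<Rightarrow> bool" where
  "lie_solvable scale br I \<longleftrightarrow> (\<exists>n. derived_series scale br I n = {0})"

definition semisimple :: "('k::field \<Rightarrow> 'v::ab_group_add \<Rightarrow> 'v) \<Rightarrow> ('v \<Rightarrow> 'v \<Rightarrow> 'v) \<Rightarrow> bool" where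
  "semisimple scale br \<longleftrightarrow> (UNIV :: 'v set) \<noteq> {0} \<and>
     (\<forall>I. lie_ideal scale br I \<and> lie_solvable scale br I \<longrightarrow> I = {0})"

text \<open>b(x) = rank(ad_x) = dim of the image of ad_x = br x.\<close>
definition breadth_elem :: "('k::field \<Rightarrow> 'v::ab_group_add \<Rightarrow> 'v) \<Rightarrow> ('v \<Rightarrow> 'v \<Rightarrow> 'v) \<Rightarrow> 'v \<Rightarrow> nat" where
  "breadth_elem scale br x = vector_space.dim scale (range (br x))"

definition breadth :: "('k::field \<Rightarrow> 'v::ab_group_add \<Rightarrow> 'v) \<Rightarrow> ('v \<Rightarrow> 'v \<Rightarrow> 'v) \<Rightarrow> nat" where
  "breadth scale br = Max (range (breadth_elem scale br))"

end

theory Submission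
  imports Defs
begin

text \<open>If every \<open>ad x\<close> has rank at most one, then the derived algebra is at most a line:
  given \<open>p = [a, b] \<noteq> 0\<close> and \<open>q = [c, d]\<close> independent of \<open>p\<close>, the images of \<open>ad a\<close>, \<open>ad b\<close>
  lie on the line of \<open>p\<close> and those of \<open>ad c\<close>, \<open>ad d\<close> on the line of \<open>q\<close>, which forces
  \<open>[a, d] = [c, b] = 0\<close>; but then \<open>ad (a + c)\<close> maps \<open>b\<close> to \<open>p\<close> and \<open>d\<close> to \<open>q\<close>, so its
  rank is two. A Lie algebra whose derived algebra is at most a line is metabelian, hence
  solvable, which a semisimple Lie algebra is not.\<close>

lemma (in vector_space) span_singleton_eq:
  assumes "w \<in> span {v}" "w \<noteq> 0"
  shows "span {w} = span {v}"
proof -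
  have "v \<in> span {w}"
    using in_span_insert[of w v "{}"] assms by simp
  then show ?thesis
    using assms(1) by (simp add: span_eq)
qed

lemma (in vector_space) span_singleton_inter_eq_zero:
  assumes "q \<notin> span {p}" "y \<in> span {p}" "y \<in> span {q}"
  shows "y = 0"
proof (rule ccontr)
  assume "y \<noteq> 0"
  then have "span {p} = span {q}"
    using assms(2,3) span_singleton_eq by metis
  then show False
    using assms(1) span_base[of q "{q}"] by simp
qed

lemma (in vector_space) subset_span_singleton_if_dim_le_one:
  assumes "finite_dimensional scale" "dim S \<le> 1"
  obtains v where "S \<subseteq> span {v}"
proof -
  obtain B where B: "finite B" "span B = UNIV"
    using assms(1) unfolding finite_dimensional_def by blast
  obtain C where C: "independent C" "S \<subseteq> span C" "card C = dim S"
    using basis_exists by metis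
  have "finite C"
    using independent_span_bound[OF B(1) C(1)] B(2) by simp
  moreover have "card C \<le> 1"
    using C(3) assms(2) by simp
  ultimately have "\<forall>x\<in>C. \<forall>y\<in>C. x = y"
    by (simp add: card_le_Suc0_iff_eq)
  then obtain v where "C \<subseteq> {v}"
    by (cases "C = {}") auto
  then have "span C \<subseteq> span {v}"
    by (rule span_mono)
  with C(2) show ?thesis
    using that by blast
qed

lemma (in vector_space) breadth_elem_le_breadth:
  assumes "finite_dimensional scale"
  shows "breadth_elem scale br x \<le> breadth scale br"
proof -
  obtain B where B: "finite B" "span B = UNIV"
    using assms unfolding finite_dimensional_def by blast
  have "breadth_elem scale br y \<le> card B" for y
    unfolding breadth_elem_def using B by (intro dim_le_card) auto
  then have "range (breadth_elem scale br) \<subseteq> {..card B}"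
    by auto
  then have "finite (range (breadth_elem scale br))"
    using finite_subset by blast
  then show ?thesis
    unfolding breadth_def by (rule Max_ge) simp
qed

locale lie_alg =
  fixes scale :: "'k::field \<Rightarrow> 'v::ab_group_add \<Rightarrow> 'v" and br :: "'v \<Rightarrow> 'v \<Rightarrow> 'v"
  assumes lie_algebra: "lie_algebra scale br"
begin

sublocale vector_space scale
  using lie_algebra by (simp add: lie_algebra_def)

lemma br_add_left: "br (x + y) z = br x z + br y z"
  and br_add_right: "br x (y + z) = br x y + br x z"
  and br_scale_left: "br (scale a x) y = scale a (br x y)"
  and br_scale_right: "br x (scale a y) = scale a (br x y)"
  and br_self: "br x x = 0"
  using lie_algebra by (simp_all add: lie_algebra_def)

lemma br_antisym: "br y x = - br x y"
proof -
  have "0 = br (x + y) (x + y)"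
    by (simp add: br_self)
  also have "\<dots> = br x y + br y x"
    unfolding br_add_left br_add_right by (simp add: br_self)
  finally show ?thesis
    by (simp add: eq_neg_iff_add_eq_0 add.commute)
qed

lemma br_swap_in_span:
  assumes "range (br x) \<subseteq> span S"
  shows "br y x \<in> span S"
  using assms br_antisym[of y x] span_neg[of "br x y" S] by auto

lemma range_br_subset_span_br:
  assumes line: "\<And>x. \<exists>v. range (br x) \<subseteq> span {v}" and nz: "br a b \<noteq> 0"
  shows "range (br a) \<subseteq> span {br a b}" "range (br b) \<subseteq> span {br a b}"
proof -
  have "range (br x) \<subseteq> span {br a b}" if "br a b \<in> span (range (br x))" for x
  proof -
    obtain v where v: "range (br x) \<subseteq> span {v}"
      using line by blast
    then have "br a b \<in> span {v}"
      using that span_mono span_span by blast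
    then have "span {br a b} = span {v}"
      using nz span_singleton_eq by blast
    with v show ?thesis
      by simp
  qed
  moreover have "br a b \<in> span (range (br a))"
    by (simp add: span_base)
  moreover have "br a b \<in> span (range (br b))"
    by (rule br_swap_in_span) (rule span_superset)
  ultimately show "range (br a) \<subseteq> span {br a b}" "range (br b) \<subseteq> span {br a b}"
    by blast+
qed

lemma derived_algebra_in_line:
  assumes line: "\<And>x. \<exists>v. range (br x) \<subseteq> span {v}"
  obtains p where "\<And>a b. br a b \<in> span {p}"
proof (cases "\<forall>a b. br a b = 0")
  case True
  then show ?thesis
    using that[of 0] span_zero by simp
next
  case False
  then obtain a b where nz: "br a b \<noteq> 0"
    by blast
  have "br c d \<in> span {br a b}" for c d
  proof (rule ccontr)
    define p q where "p = br a b" and "q = br c d"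
    assume "br c d \<notin> span {br a b}"
    then have indep: "q \<notin> span {p}"
      by (simp add: p_def q_def)
    then have "q \<noteq> 0"
      using span_zero by auto
    then have Lq: "range (br c) \<subseteq> span {q}" "range (br d) \<subseteq> span {q}"
      using range_br_subset_span_br[OF line] q_def by auto
    have Lp: "range (br a) \<subseteq> span {p}" "range (br b) \<subseteq> span {p}"
      using range_br_subset_span_br[OF line nz] p_def by auto
    have "br a d = 0"
      using span_singleton_inter_eq_zero[OF indep] Lp(1) br_swap_in_span[OF Lq(2)] by blast
    moreover have "br c b = 0"
      using span_singleton_inter_eq_zero[OF indep] br_swap_in_span[OF Lp(2)] Lq(1) by blast
    ultimately have "br (a + c) b = p" "br (a + c) d = q"
      by (simp_all add: br_add_left p_def q_def)
    moreover obtain v where "range (br (a + c)) \<subseteq> span {v}"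
      using line by blast
    ultimately have "p \<in> span {v}" "q \<in> span {v}"
      by (metis rangeI subsetD)+
    then have "q \<in> span {p}"
      using span_singleton_eq nz p_def by metis
    with indep show False ..
  qed
  then show ?thesis
    using that by blast
qed

lemma derived_series_two_eq_zero:
  assumes "\<And>a b. br a b \<in> span {p}"
  shows "derived_series scale br UNIV 2 = {0}"
proof -
  let ?D1 = "derived_series scale br UNIV 1"
  have "?D1 \<subseteq> span {p}"
    unfolding One_nat_def derived_series.simps using assms by (intro span_minimal) auto
  moreover have "br x y = 0" if "x \<in> span {p}" "y \<in> span {p}" for x y
    using that by (auto simp: span_singleton br_scale_left br_scale_right br_self)
  ultimately have "{br x y | x y. x \<in> ?D1 \<and> y \<in> ?D1} \<subseteq> span {}"
    by auto
  then have "span {br x y | x y. x \<in> ?D1 \<and> y \<in> ?D1} \<subseteq> span {}"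
    by (rule span_minimal[OF _ subspace_span])
  moreover have "derived_series scale br UNIV 2 = span {br x y | x y. x \<in> ?D1 \<and> y \<in> ?D1}"
    using derived_series.simps(2)[of scale br UNIV 1] by (simp only: Suc_1)
  ultimately show ?thesis
    using span_zero by auto
qed

end

theorem proposition2p5:
  fixes scale :: "'k::field \<Rightarrow> 'v::ab_group_add \<Rightarrow> 'v"
    and br :: "'v \<Rightarrow> 'v \<Rightarrow> 'v"
  assumes "(2::'k) \<noteq> 0"
    and "lie_algebra scale br"
    and "finite_dimensional scale"
    and "semisimple scale br"
  shows "breadth scale br \<ge> 2"
proof (rule ccontr)
  assume "\<not> breadth scale br \<ge> 2"
  then have breadth_le_one: "breadth scale br \<le> 1"
    by simp
  interpret lie_alg scale br
    using assms(2) by (rule lie_alg.intro)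
  have line: "\<exists>v. range (br x) \<subseteq> span {v}" for x
  proof -
    have "dim (range (br x)) \<le> 1"
      using breadth_elem_le_breadth[OF assms(3), of br x] breadth_le_one
      unfolding breadth_elem_def by simp
    then show ?thesis
      using subset_span_singleton_if_dim_le_one[OF assms(3)] by blast
  qed
  obtain p where "\<And>a b. br a b \<in> span {p}"
    using derived_algebra_in_line[OF line] by blast
  then have "derived_series scale br UNIV 2 = {0}"
    by (rule derived_series_two_eq_zero)
  then have "lie_solvable scale br UNIV"
    unfolding lie_solvable_def by blast
  moreover have "lie_ideal scale br UNIV"
    by (simp add: lie_ideal_def)
  ultimately show False
    using assms(4) unfolding semisimple_def by blast
qed

end
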